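(* Let a project have countable state space $\mathbb{X}$, transition probabilities $p(i,j)$ such that for every $i$, $|\{j:p(i,j)>0\}|\le N$, bounded active rewards $R(i)$, discount factor $0<\beta\le1$, horizon $T$, and initial state $i_0$. Let $\mathbb{X}_s(i_0)$ be the (finite) set of states reachable from $i_0$ within $s$ transitions, and let $\mathbb{Y}_T^{\{0,1\}}(i_0)=\{(d,i):1\le d\le T,\ i\in\mathbb{X}_{T-d}(i_0)\}$. For $(d,i)$ with $1\le d\le T$ define $$\lambda^*(d,i)=\max_{1\le\tau\le d}\frac{\mathsf{E}_i^{\tau}\big[\sum_{t=0}^{\tau-1}\beta^tR(X(t))\big]}{\mathsf{E}_i^{\tau}\big[\sum_{t=0}^{\tau-1}\beta^t\big]}.$$ Consider the auxiliary project with state space $\mathbb{Y}_T^{\{0,1\}}(i_0)\cup\{(0,\Omega)\}$ in which, under the active action, $(d,i)$ with $d\ge2$ moves to $(d-1,j)$ with probability $p(i,j)$, $(1,i)$ moves to the absorbing state $(0,\Omega)$, and the active reward is $R^1(d,i)=R(i)$; and let $$G'(d,i)=\max_{1\le\tau\le d}\frac{\mathsf{E}_{(d,i)}^{\tau}\big[\sum_{t=0}^{\tau-1}\beta^tR^1(Y(t))\big]}{\mathsf{E}_{(d,i)}^{\tau}\big[\sum_{t=0}^{\tau-1}\beta^t\big]}$$ for $(d,i)\in\mathbb{Y}_T^{\{0,1\}}(i_0)$, $Y(t)$ being the auxiliary project's state engaged from $Y(0)=(d,i)$. Then $\lambda^*(d,i)=G'(d,i)$ for all $(d,i)\in\ma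thbb{Y}_T^{\{0,1\}}(i_0)$.
   Context: The state $X(t)$ evolves as a Markov chain with transition probabilities $p(i,j)$ each time the project is engaged; stopping times are with respect to the history of the process. Note that if $i\in\mathbb{X}_{T-d}(i_0)$, all states reachable within $d-1$ further transitions lie in $\mathbb{X}_{T-1}(i_0)$ with correspondingly smaller remaining times, so the auxiliary project is well defined. *)

theory Defs
  imports "HOL-Analysis.Analysis"
begin

text \<open>A stopping rule stp :: 'a list => bool looks at the history [X(0),...,X(t)] (t >= 1)
 and says whether to stop at time t; together with the forced stop at horizon d this
 gives a stopping time tau with 1 <= tau <= d adapted to the history.\<close>

definition succs :: "('a \<Rightarrow> 'a \<Rightarrow> real) \<Rightarrow> 'a \<Rightarrow> 'a set" where
  "succs p i = {j. 0 < p i j}"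

text \<open>stopped_val p f beta stp n h: expected value of sum_{t<tau} beta^t f(X(t)),
 counted from the current state last h (history h), with at most n remaining periods.\<close>
fun stopped_val :: "('a \<Rightarrow> 'a \<Rightarrow> real) \<Rightarrow> ('a \<Rightarrow> real) \<Rightarrow> real \<Rightarrow> ('a list \<Rightarrow> bool)
                     \<Rightarrow> nat \<Rightarrow> 'a list \<Rightarrow> real" where
  "stopped_val p f beta stp 0 h = 0"
| "stopped_val p f beta stp (Suc n) h =
     f (last h) + beta * (\<Sum>j\<in>succs p (last h).
        p (last h) j * (if stp (h @ [j]) then 0 else stopped_val p f beta stp n (h @ [j])))"

text \<open>Index: max over stopping times 1 <= tau <= d of the reward/time ratio
 (written as a supremum over all stopping rules; the value set is attained).\<close>
definition index_val :: "('a \<Rightarrow> 'a \<Rightarrow> real) \<Rightarrow> ('a \<Rightarrow> real) \<Rightarrow> real \<Rightarrow> nat \<Rightarrow> 'a \<Rightarrow> real" where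
  "index_val p R beta d i =
     (SUP stp. stopped_val p R beta stp d [i] / stopped_val p (\<lambda>_. 1) beta stp d [i])"

fun reach :: "('a \<Rightarrow> 'a \<Rightarrow> real) \<Rightarrow> nat \<Rightarrow> 'a \<Rightarrow> 'a set" where
  "reach p 0 i0 = {i0}"
| "reach p (Suc s) i0 = reach p s i0 \<union> {j. \<exists>i\<in>reach p s i0. 0 < p i j}"

definition Y_set :: "('a \<Rightarrow> 'a \<Rightarrow> real) \<Rightarrow> nat \<Rightarrow> 'a \<Rightarrow> (nat \<times> 'a) set" where
  "Y_set p T i0 = {(d, i). 1 \<le> d \<and> d \<le> T \<and> i \<in> reach p (T - d) i0}"

text \<open>Auxiliary project: states Some (d,i), and None standing for the absorbing (0,Omega).\<close>
fun aux_p :: "('a \<Rightarrow> 'a \<Rightarrow> real) \<Rightarrow> (nat \<times> 'a) option \<Rightarrow> (nat \<times> 'a) option \<Rightarrow> real" where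
  "aux_p p None y = (if y = None then 1 else 0)"
| "aux_p p (Some (d, i)) y =
     (if 2 \<le> d then (case y of None \<Rightarrow> 0 | Some (d', j) \<Rightarrow> if d' = d - 1 then p i j else 0)
      else (if y = None then 1 else 0))"

fun aux_R :: "('a \<Rightarrow> real) \<Rightarrow> (nat \<times> 'a) option \<Rightarrow> real" where
  "aux_R R None = 0"
| "aux_R R (Some (d, i)) = R i"

end

theory Submission
  imports Defs
begin

text \<open>A state \<open>(d, i)\<close> of the auxiliary project is the state \<open>i\<close> tagged with its remaining
  horizon \<open>d\<close>; along any history the tag just counts down, and the absorbing state \<open>(0, \<Omega>)\<close> is
  only entered when the horizon forces a stop anyway. Tagging the \<open>k\<close>-th entry of a history
  with \<open>d - k\<close> is therefore a bijection between histories of the two projects which preserves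
  transition probabilities and rewards. It transports stopping rules in both directions and leaves
  the expected stopped reward and the expected discounted stopping time unchanged, so both indices
  are suprema of the same set of ratios.\<close>

definition lift_history :: "nat \<Rightarrow> 'a list \<Rightarrow> (nat \<times> 'a) option list" where
  "lift_history d h = map (\<lambda>k. Some (d - k, h ! k)) [0..<length h]"

lemma lift_history_snoc:
  "lift_history d (h @ [j]) = lift_history d h @ [Some (d - length h, j)]"
  by (simp add: lift_history_def nth_append)

lemma last_lift_history:
  "h \<noteq> [] \<Longrightarrow> last (lift_history d h) = Some (d - (length h - 1), last h)"
  by (simp add: lift_history_def last_map last_conv_nth)

lemma map_snd_the_lift_history: "map (\<lambda>x. snd (the x)) (lift_history d h) = h"
  by (rule nth_equalityI) (auto simp: lift_history_def)

lemma succs_aux_p: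
  "2 \<le> d \<Longrightarrow> succs (aux_p p) (Some (d, i)) = (\<lambda>j. Some (d - 1, j)) ` succs p i"
  by (auto simp: succs_def split: option.splits if_splits)

lemma stopped_val_Suc_0: "stopped_val p f beta stp (Suc 0) h = f (last h)"
  by (simp cong: if_cong)

lemma stopped_val_aux_p_lift_history:
  assumes stp: "\<And>g. stp' (lift_history d g) = stp g"
    and f: "\<And>m i. f' (Some (m, i)) = f i"
    and "n + length h = d + 1" "h \<noteq> []"
  shows "stopped_val (aux_p p) f' beta stp' n (lift_history d h) = stopped_val p f beta stp n h"
  using assms(3,4)
proof (induction n arbitrary: h)
  case 0
  then show ?case by simp
next
  case (Suc n)
  have last_lift: "last (lift_history d h) = Some (Suc n, last h)"
    using Suc.prems by (cases h) (auto simp: last_lift_history)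
  show ?case
  proof (cases "n = 0")
    case True
    then show ?thesis using last_lift f by (simp only: stopped_val_Suc_0)
  next
    case False
    have succs: "succs (aux_p p) (Some (Suc n, last h)) = (\<lambda>j. Some (n, j)) ` succs p (last h)"
      using False succs_aux_p[of "Suc n" p "last h"] by simp
    have inj: "inj_on (\<lambda>j. Some (n, j)) (succs p (last h))"
      by (auto simp: inj_on_def)
    have term_eq: "aux_p p (Some (Suc n, last h)) (Some (n, j)) *
        (if stp' (lift_history d h @ [Some (n, j)]) then 0
         else stopped_val (aux_p p) f' beta stp' n (lift_history d h @ [Some (n, j)]))
      = p (last h) j * (if stp (h @ [j]) then 0 else stopped_val p f beta stp n (h @ [j]))" for j
    proof -
      have snoc: "lift_history d h @ [Some (n, j)] = lift_history d (h @ [j])"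
        using Suc.prems by (simp add: lift_history_snoc)
      have "stopped_val (aux_p p) f' beta stp' n (lift_history d (h @ [j]))
          = stopped_val p f beta stp n (h @ [j])"
        using Suc.IH[of "h @ [j]"] Suc.prems by simp
      then show ?thesis
        using False by (simp add: snoc stp)
    qed
    show ?thesis
      by (simp only: stopped_val.simps last_lift succs f sum.reindex[OF inj] o_def term_eq)
  qed
qed

lemma stopped_val_aux_p_initial:
  assumes "\<And>g. stp' (lift_history d g) = stp g" and "\<And>m i. f' (Some (m, i)) = f i"
  shows "stopped_val (aux_p p) f' beta stp' d [Some (d, i)] = stopped_val p f beta stp d [i]"
  using stopped_val_aux_p_lift_history[where stp' = stp' and stp = stp and d = d and f' = f' and f = f
      and n = d and h = "[i]", OF assms]
  by (simp add: lift_history_def)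

lemma index_val_aux_p:
  "index_val p R beta d i = index_val (aux_p p) (aux_R R) beta d (Some (d, i))"
proof -
  let ?ratio = "\<lambda>stp. stopped_val p R beta stp d [i] / stopped_val p (\<lambda>_. 1) beta stp d [i]"
  let ?ratio' = "\<lambda>stp'. stopped_val (aux_p p) (aux_R R) beta stp' d [Some (d, i)] /
                   stopped_val (aux_p p) (\<lambda>_. 1) beta stp' d [Some (d, i)]"
  have ratio_eq: "?ratio' stp' = ?ratio stp" if "\<And>g. stp' (lift_history d g) = stp g" for stp stp'
    using stopped_val_aux_p_initial[where stp' = stp' and stp = stp and d = d and f' = "aux_R R" and f = R,
        OF that]
      stopped_val_aux_p_initial[where stp' = stp' and stp = stp and d = d and f' = "\<lambda>_. 1"
        and f = "\<lambda>_. 1", OF that]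
    by simp
  have "range ?ratio \<subseteq> range ?ratio'"
  proof clarify
    fix stp :: "'a list \<Rightarrow> bool"
    have "?ratio stp = ?ratio' (\<lambda>g. stp (map (\<lambda>x. snd (the x)) g))"
      by (rule ratio_eq[symmetric]) (simp add: map_snd_the_lift_history)
    then show "?ratio stp \<in> range ?ratio'" by blast
  qed
  moreover have "range ?ratio' \<subseteq> range ?ratio"
  proof clarify
    fix stp' :: "(nat \<times> 'a) option list \<Rightarrow> bool"
    have "?ratio' stp' = ?ratio (\<lambda>g. stp' (lift_history d g))"
      by (rule ratio_eq) simp
    then show "?ratio' stp' \<in> range ?ratio" by blast
  qed
  ultimately have "range ?ratio = range ?ratio'"
    by (rule equalityI)
  then show ?thesis
    by (simp add: index_val_def)
qed

theorem proposition6: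
  fixes p :: "'a::countable \<Rightarrow> 'a \<Rightarrow> real" and R :: "'a \<Rightarrow> real"
    and beta :: real and N T :: nat and i0 :: 'a
  assumes p_nonneg: "\<And>i j. 0 \<le> p i j"
    and p_fin: "\<And>i. finite {j. 0 < p i j} \<and> card {j. 0 < p i j} \<le> N"
    and p_stoch: "\<And>i. (\<Sum>j\<in>{j. 0 < p i j}. p i j) = 1"
    and R_bdd: "\<exists>B. \<forall>i. \<bar>R i\<bar> \<le> B"
    and beta: "0 < beta" "beta \<le> 1"
  shows "\<forall>(d, i) \<in> Y_set p T i0.
           index_val p R beta d i = index_val (aux_p p) (aux_R R) beta d (Some (d, i))"
  by (clarify, rule index_val_aux_p)

end
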